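(* Let $\mathcal{H}$ be a real Hilbert space, let $\Gamma\subseteq\mathbb{R}_{++}$ be nonempty, let $\beta\in[0,1)$ and let $(T_\gamma)_{\gamma\in\Gamma}$ be a family of $\beta$-contractions on $\mathcal{H}$ with $\operatorname{Fix}T_\gamma\neq\emptyset$ for all $\gamma\in\Gamma$. Let $(\mathcal{Q}_{\delta\leftarrow\gamma})_{\gamma,\delta\in\Gamma}$ be fixed-point relocators for $(T_\gamma)_{\gamma\in\Gamma}$ with Lipschitz constants $(\mathcal{L}_{\delta\leftarrow\gamma})_{\gamma,\delta\in\Gamma}$ in $[1,+\infty)$. Suppose that: (1) for each bounded subset $S\subseteq\bigcup_{\gamma\in\Gamma}(\operatorname{Fix}T_\gamma\times\{\gamma\})$ there exists $L>0$ with $\|\mathcal{Q}_{\delta\leftarrow\gamma}x-\mathcal{Q}_{\gamma\leftarrow\gamma}x\|\le L|\delta-\gamma|$ for all $\delta\in\Gamma$ and all $(x,\gamma)\in S$; (2) the map $\mathcal{H}\times\Gamma\to\mathcal{H}$, $(x,\gamma)\mapsto T_\gamma x$, is continuous; (3) $(\gamma_n)_{n\in\mathbb{N}}\subseteq\Gamma$ converges $R$-linearly to some $\gamma^*\in\Gamma$, and $\sum_{n\in\mathbb{N}}(\mathcal{L}_{\gamma_{n+1}\leftarrow\gamma_n}-1)<+\infty$. Given $x_0\in\mathcal{H}$, define $x_{n+1}:=\mathcal{Q}_{\gamma_{n+1}\leftarrow\gamma_n}T_{\gamma_n}x_n$ for all $n\in\mathbb{N}$. Then (i) $(\operatorname{dist}(x_n,\operatorname{Fix}T_{\gamma_n}))_{n\in\mathbb{N}}$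 converges $R$-linearly to zero, and (ii) $(x_n)_{n\in\mathbb{N}}$ and $(T_{\gamma_n}x_n)_{n\in\mathbb{N}}$ converge $R$-linearly to the same point in $\operatorname{Fix}T_{\gamma^*}$.
   Context: A $\beta$-contraction is a map $T$ with $\|Tx-Ty\|\le\beta\|x-y\|$ for all $x,y$, where $\beta\in[0,1)$. $\operatorname{Fix}T=\{x:Tx=x\}$, $\operatorname{dist}(x,C)=\inf_{y\in C}\|x-y\|$. Fixed-point relocators: given a nonempty $\Gamma\subseteq\mathbb{R}_{++}$ and operators $(T_\gamma)_{\gamma\in\Gamma}$ on $\mathcal{H}$, a family of operators $(\mathcal{Q}_{\delta\leftarrow\gamma})_{\delta,\gamma\in\Gamma}$ on $\mathcal{H}$ is called fixed-point relocators for $(T_\gamma)$ with Lipschitz constants $(\mathcal{L}_{\delta\leftarrow\gamma})$ in $[1,\infty)$ if: (a) for all $\gamma,\delta\in\Gamma$, the restriction of $\mathcal{Q}_{\delta\leftarrow\gamma}$ to $\operatorname{Fix}T_\gamma$ is a bijection from $\operatorname{Fix}T_\gamma$ onto $\operatorname{Fix}T_\delta$; (b) for all $\gamma\in\Gamma$ and $x\in\operatorname{Fix}T_\gamma$, $\delta\mapsto\mathcal{Q}_{\delta\leftarrow\gamma}x$ is continuous on $\Gamma$; (c) for all $\gamma,\delta,\epsilon\in\Gamma$ and $x\in\operatorname{Fix}T_\gamma$, $\mathcal{Q}_{\epsilon\leftarrow\delta}\mathcal{Q}_{\delta\leftarrow\gamma}x=\mathcal{Q}_{\epsilon\leftarrow\gamma}x$;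 (d) each $\mathcal{Q}_{\delta\leftarrow\gamma}$ is $\mathcal{L}_{\delta\leftarrow\gamma}$-Lipschitz. A sequence $(a_n)$ converges $R$-linearly to $a$ if there exist $C\ge0$, $r\in(0,1)$ with $\|a_n-a\|\le Cr^n$ for all $n$. *)

theory Defs
  imports "HOL-Analysis.Analysis"
begin

definition fixset :: "('a \<Rightarrow> 'a) \<Rightarrow> 'a set" where
  "fixset T = {x. T x = x}"

definition contraction_with :: "real \<Rightarrow> ('a::real_normed_vector \<Rightarrow> 'a) \<Rightarrow> bool" where
  "contraction_with \<beta> T \<longleftrightarrow> 0 \<le> \<beta> \<and> \<beta> < 1 \<and> (\<forall>x y. norm (T x - T y) \<le> \<beta> * norm (x - y))"

text \<open>Q d g stands for the relocator Q_(d <- g); Lc d g for its Lipschitz constant.\<close>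
definition fixed_point_relocators ::
  "real set \<Rightarrow> (real \<Rightarrow> 'a::real_normed_vector \<Rightarrow> 'a) \<Rightarrow> (real \<Rightarrow> real \<Rightarrow> 'a \<Rightarrow> 'a)
     \<Rightarrow> (real \<Rightarrow> real \<Rightarrow> real) \<Rightarrow> bool" where
  "fixed_point_relocators \<Gamma> T Q Lc \<longleftrightarrow>
     (\<forall>g\<in>\<Gamma>. \<forall>d\<in>\<Gamma>. bij_betw (Q d g) (fixset (T g)) (fixset (T d))) \<and>
     (\<forall>g\<in>\<Gamma>. \<forall>x\<in>fixset (T g). continuous_on \<Gamma> (\<lambda>d. Q d g x)) \<and>
     (\<forall>g\<in>\<Gamma>. \<forall>d\<in>\<Gamma>. \<forall>e\<in>\<Gamma>. \<forall>x\<in>fixset (T g). Q e d (Q d g x) = Q e g x) \<and>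
     (\<forall>g\<in>\<Gamma>. \<forall>d\<in>\<Gamma>. 1 \<le> Lc d g \<and> (\<forall>x y. norm (Q d g x - Q d g y) \<le> Lc d g * norm (x - y)))"

definition R_linear_conv :: "(nat \<Rightarrow> 'a::real_normed_vector) \<Rightarrow> 'a \<Rightarrow> bool" where
  "R_linear_conv a l \<longleftrightarrow> (\<exists>C r. 0 \<le> C \<and> 0 < r \<and> r < 1 \<and> (\<forall>n. norm (a n - l) \<le> C * r ^ n))"

end

theory Submission
  imports Defs
begin

text \<open>
  A \<open>\<beta>\<close>-contraction \<open>T \<gamma>\<close> has exactly one fixed point \<open>p \<gamma>\<close>, and a relocator, being a
  bijection between singletons, maps \<open>p \<gamma>\<close> to \<open>p \<delta>\<close>. Hence \<open>e n = norm (x n - p (\<gamma> n))\<close>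
  satisfies \<open>e (n + 1) \<le> L n * \<beta> * e n\<close> with \<open>1 \<le> L n = Lc (\<gamma> (n + 1)) (\<gamma> n)\<close>, and
  \<open>\<Prod> L n \<le> exp (\<Sum> (L n - 1)) < \<infinity>\<close> gives \<open>e n = O(\<beta> ^ n)\<close>. Condition (1) for the single
  pair \<open>(p \<gamma>\<^sup>*, \<gamma>\<^sup>*)\<close> makes \<open>p\<close> Lipschitz at \<open>\<gamma>\<^sup>*\<close>, so \<open>p (\<gamma> n) \<rightarrow> p \<gamma>\<^sup>*\<close> R-linearly, and
  the triangle inequality finishes the proof.
\<close>

lemma R_linear_convI:
  assumes "0 \<le> C" "0 \<le> r" "r < 1" "\<And>n. norm (a n - l) \<le> C * r ^ n"
  shows "R_linear_conv a l"
proof -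
  define s where "s = max r (1/2)"
  have "norm (a n - l) \<le> C * s ^ n" for n
    using assms(4)[of n] mult_left_mono[OF power_mono[of r s n] \<open>0 \<le> C\<close>] assms(2)
    by (simp add: s_def)
  moreover have "0 < s" "s < 1" using assms(3) by (auto simp: s_def)
  ultimately show ?thesis
    unfolding R_linear_conv_def using \<open>0 \<le> C\<close> by blast
qed

lemma R_linear_conv_dominated:
  assumes "R_linear_conv a l" "0 \<le> K" "\<And>n. norm (b n - m) \<le> K * norm (a n - l)"
  shows "R_linear_conv b m"
proof -
  obtain C r where Cr: "0 \<le> C" "0 < r" "r < 1" "\<And>n. norm (a n - l) \<le> C * r ^ n"
    using assms(1) unfolding R_linear_conv_def by blast
  have "norm (b n - m) \<le> (K * C) * r ^ n" for n
    using assms(3)[of n] mult_left_mono[OF Cr(4)[of n] \<open>0 \<le> K\<close>] by (simp add: mult.assoc)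
  then show ?thesis
    using Cr \<open>0 \<le> K\<close> by (intro R_linear_convI[of "K * C" r]) auto
qed

lemma R_linear_conv_sum_bound:
  fixes u v :: "nat \<Rightarrow> real"
  assumes "R_linear_conv u 0" "R_linear_conv v 0" "\<And>n. norm (a n - l) \<le> u n + v n"
  shows "R_linear_conv a l"
proof -
  obtain C r where Cr: "0 \<le> C" "0 < r" "r < 1" "\<And>n. \<bar>u n\<bar> \<le> C * r ^ n"
    using assms(1) unfolding R_linear_conv_def by auto
  obtain D s where Ds: "0 \<le> D" "0 < s" "s < 1" "\<And>n. \<bar>v n\<bar> \<le> D * s ^ n"
    using assms(2) unfolding R_linear_conv_def by auto
  have "u n + v n \<le> (C + D) * max r s ^ n" for n
  proof -
    have "u n \<le> C * max r s ^ n"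
      using Cr(4)[of n] mult_left_mono[OF power_mono[of r "max r s" n] \<open>0 \<le> C\<close>] Cr(2) by linarith
    moreover have "v n \<le> D * max r s ^ n"
      using Ds(4)[of n] mult_left_mono[OF power_mono[of s "max r s" n] \<open>0 \<le> D\<close>] Ds(2) by linarith
    ultimately show ?thesis by (simp add: distrib_right)
  qed
  then show ?thesis
    using assms(3) Cr Ds by (intro R_linear_convI[of "C + D" "max r s"]) (auto intro: order_trans)
qed

lemma perturbed_geometric_bound:
  fixes e a :: "nat \<Rightarrow> real"
  assumes "0 \<le> \<beta>" "\<And>n. 0 \<le> e n" "\<And>n. 1 \<le> a n" "summable (\<lambda>n. a n - 1)"
    and step: "\<And>n. e (Suc n) \<le> a n * (\<beta> * e n)"
  shows "e n \<le> e 0 * exp (\<Sum>k. a k - 1) * \<beta> ^ n"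
proof -
  have partial: "e n \<le> e 0 * exp (\<Sum>k<n. a k - 1) * \<beta> ^ n" for n
  proof (induction n)
    case 0
    then show ?case by simp
  next
    case (Suc n)
    have "e (Suc n) \<le> a n * (\<beta> * e n)" by (rule step)
    also have "\<dots> \<le> exp (a n - 1) * (\<beta> * (e 0 * exp (\<Sum>k<n. a k - 1) * \<beta> ^ n))"
      using Suc.IH assms(1,2,3) exp_ge_add_one_self[of "a n - 1"]
      by (intro mult_mono mult_left_mono) auto
    also have "\<dots> = e 0 * exp (\<Sum>k<Suc n. a k - 1) * \<beta> ^ Suc n"
      by (simp add: mult_exp_exp algebra_simps)
    finally show ?case .
  qed
  have "(\<Sum>k<n. a k - 1) \<le> (\<Sum>k. a k - 1)"
    using sum_le_suminf[OF assms(4)] assms(3) by force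
  then have "e 0 * exp (\<Sum>k<n. a k - 1) * \<beta> ^ n \<le> e 0 * exp (\<Sum>k. a k - 1) * \<beta> ^ n"
    using assms(1,2) by (intro mult_right_mono mult_left_mono) auto
  with partial[of n] show ?thesis by linarith
qed

lemma R_linear_conv_perturbed_contraction:
  fixes e a :: "nat \<Rightarrow> real"
  assumes "0 \<le> \<beta>" "\<beta> < 1" "\<And>n. 0 \<le> e n" "\<And>n. 1 \<le> a n" "summable (\<lambda>n. a n - 1)"
    and "\<And>n. e (Suc n) \<le> a n * (\<beta> * e n)"
  shows "R_linear_conv e 0"
  using assms perturbed_geometric_bound[of \<beta> e a]
  by (intro R_linear_convI[of "e 0 * exp (\<Sum>k. a k - 1)" \<beta>]) auto

lemma contraction_with_fixpoint_dist:
  assumes "contraction_with \<beta> T" "T p = p"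
  shows "norm (T y - p) \<le> \<beta> * norm (y - p)"
  using assms unfolding contraction_with_def by metis

lemma contraction_with_fixset_singleton:
  assumes "contraction_with \<beta> T" "fixset T \<noteq> {}"
  obtains p where "fixset T = {p}"
proof -
  obtain p where p: "p \<in> fixset T" using assms(2) by blast
  have "y = p" if "y \<in> fixset T" for y
  proof -
    have "norm (y - p) \<le> \<beta> * norm (y - p)"
      using contraction_with_fixpoint_dist[OF assms(1), of p y] p that by (simp add: fixset_def)
    then show ?thesis
      using assms(1) unfolding contraction_with_def by (simp add: mult_le_cancel_right1)
  qed
  with p that show thesis by blast
qed

lemma fixed_point_relocators_lipschitz:
  assumes "fixed_point_relocators \<Gamma> T Q Lc" "g \<in> \<Gamma>" "d \<in> \<Gamma>"
  shows "1 \<le> Lc d g" "norm (Q d g y - Q d g z) \<le> Lc d g * norm (y - z)"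
  using assms unfolding fixed_point_relocators_def by blast+

lemma fixed_point_relocators_unique_fixpoint:
  assumes "fixed_point_relocators \<Gamma> T Q Lc" "g \<in> \<Gamma>" "d \<in> \<Gamma>"
    and "fixset (T g) = {a}" "fixset (T d) = {b}"
  shows "Q d g a = b"
proof -
  have "bij_betw (Q d g) (fixset (T g)) (fixset (T d))"
    using assms(1-3) unfolding fixed_point_relocators_def by blast
  then show ?thesis
    using assms(4,5) bij_betw_apply by fastforce
qed

lemma unique_fixpoint_lipschitz_at:
  assumes reloc: "fixed_point_relocators \<Gamma> T Q Lc"
    and lip: "\<forall>S. bounded S \<and> S \<subseteq> (\<Union>g\<in>\<Gamma>. fixset (T g) \<times> {g}) \<longrightarrow>
                (\<exists>L>0. \<forall>d\<in>\<Gamma>. \<forall>(y, g)\<in>S. norm (Q d g y - Q g g y) \<le> L * \<bar>d - g\<bar>)"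
    and p: "\<And>g. g \<in> \<Gamma> \<Longrightarrow> fixset (T g) = {p g}" and "g \<in> \<Gamma>"
  obtains L where "0 < L" "\<And>d. d \<in> \<Gamma> \<Longrightarrow> norm (p d - p g) \<le> L * \<bar>d - g\<bar>"
proof -
  have "{(p g, g)} \<subseteq> (\<Union>g\<in>\<Gamma>. fixset (T g) \<times> {g})"
    using p \<open>g \<in> \<Gamma>\<close> by blast
  then obtain L where "0 < L" and L: "\<forall>d\<in>\<Gamma>. norm (Q d g (p g) - Q g g (p g)) \<le> L * \<bar>d - g\<bar>"
    using lip[rule_format, of "{(p g, g)}"] by auto
  moreover have "Q d g (p g) = p d" if "d \<in> \<Gamma>" for d
    using fixed_point_relocators_unique_fixpoint[OF reloc \<open>g \<in> \<Gamma>\<close> that p p] that \<open>g \<in> \<Gamma>\<close> by blast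
  ultimately show thesis
    using that \<open>g \<in> \<Gamma>\<close> by simp
qed

lemma relocated_contraction_step:
  assumes "contraction_with \<beta> S" "S a = a" "0 \<le> c" "\<And>y z. norm (R y - R z) \<le> c * norm (y - z)"
  shows "norm (R (S y) - R a) \<le> c * (\<beta> * norm (y - a))"
proof -
  have "norm (R (S y) - R a) \<le> c * norm (S y - a)"
    using assms(2,4) by metis
  also have "\<dots> \<le> c * (\<beta> * norm (y - a))"
    using contraction_with_fixpoint_dist[OF assms(1,2)] \<open>0 \<le> c\<close> by (rule mult_left_mono)
  finally show ?thesis .
qed

lemma relocated_iteration_dist_R_linear:
  assumes reloc: "fixed_point_relocators \<Gamma> T Q Lc"
    and beta: "0 \<le> \<beta>" "\<beta> < 1" and contr: "\<forall>g\<in>\<Gamma>. contraction_with \<beta> (T g)"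
    and p: "\<And>g. g \<in> \<Gamma> \<Longrightarrow> fixset (T g) = {p g}"
    and gam_in: "\<forall>n. gam n \<in> \<Gamma>" and Lsum: "summable (\<lambda>n. Lc (gam (Suc n)) (gam n) - 1)"
    and x_rec: "\<forall>n. x (Suc n) = Q (gam (Suc n)) (gam n) (T (gam n) (x n))"
  shows "R_linear_conv (\<lambda>n. norm (x n - p (gam n))) 0"
proof (rule R_linear_conv_perturbed_contraction[OF beta _ _ Lsum])
  fix n
  have g: "gam n \<in> \<Gamma>" "gam (Suc n) \<in> \<Gamma>" using gam_in by auto
  have "T (gam n) (p (gam n)) = p (gam n)"
    using p[OF g(1)] by (auto simp: fixset_def)
  then have "norm (Q (gam (Suc n)) (gam n) (T (gam n) (x n)) - Q (gam (Suc n)) (gam n) (p (gam n)))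
      \<le> Lc (gam (Suc n)) (gam n) * (\<beta> * norm (x n - p (gam n)))"
    using contr g fixed_point_relocators_lipschitz[OF reloc g]
    by (intro relocated_contraction_step) auto
  then show "norm (x (Suc n) - p (gam (Suc n)))
      \<le> Lc (gam (Suc n)) (gam n) * (\<beta> * norm (x n - p (gam n)))"
    using x_rec fixed_point_relocators_unique_fixpoint[OF reloc g p p] g by simp
qed (use fixed_point_relocators_lipschitz(1)[OF reloc] gam_in in auto)

theorem corollary3p8:
  fixes \<Gamma> :: "real set" and \<beta> :: real
    and T :: "real \<Rightarrow> 'a::{real_inner, complete_space} \<Rightarrow> 'a"
    and Q :: "real \<Rightarrow> real \<Rightarrow> 'a \<Rightarrow> 'a" and Lc :: "real \<Rightarrow> real \<Rightarrow> real"
    and gam :: "nat \<Rightarrow> real" and gstar :: real and x :: "nat \<Rightarrow> 'a"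
  assumes Gamma_pos: "\<Gamma> \<subseteq> {0<..}" and Gamma_ne: "\<Gamma> \<noteq> {}"
    and beta: "0 \<le> \<beta>" "\<beta> < 1"
    and contr: "\<forall>g\<in>\<Gamma>. contraction_with \<beta> (T g)"
    and fix_ne: "\<forall>g\<in>\<Gamma>. fixset (T g) \<noteq> {}"
    and reloc: "fixed_point_relocators \<Gamma> T Q Lc"
    and cond1: "\<forall>S. bounded S \<and> S \<subseteq> (\<Union>g\<in>\<Gamma>. fixset (T g) \<times> {g}) \<longrightarrow>
                  (\<exists>L>0. \<forall>d\<in>\<Gamma>. \<forall>(y, g)\<in>S. norm (Q d g y - Q g g y) \<le> L * \<bar>d - g\<bar>)"
    and cond2: "continuous_on (UNIV \<times> \<Gamma>) (\<lambda>(y, g). T g y)"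
    and gam_in: "\<forall>n. gam n \<in> \<Gamma>" and gstar_in: "gstar \<in> \<Gamma>"
    and gam_conv: "R_linear_conv gam gstar"
    and Lsum: "summable (\<lambda>n. Lc (gam (Suc n)) (gam n) - 1)"
    and x_rec: "\<forall>n. x (Suc n) = Q (gam (Suc n)) (gam n) (T (gam n) (x n))"
  shows "R_linear_conv (\<lambda>n. infdist (x n) (fixset (T (gam n)))) 0 \<and>
         (\<exists>p\<in>fixset (T gstar). R_linear_conv x p \<and> R_linear_conv (\<lambda>n. T (gam n) (x n)) p)"
proof -
  have "\<forall>g\<in>\<Gamma>. \<exists>q. fixset (T g) = {q}"
    using contraction_with_fixset_singleton contr fix_ne by metis
  then obtain p where p: "\<And>g. g \<in> \<Gamma> \<Longrightarrow> fixset (T g) = {p g}"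
    by metis
  have dist_conv: "R_linear_conv (\<lambda>n. norm (x n - p (gam n))) 0"
    using relocated_iteration_dist_R_linear[OF reloc beta contr p gam_in Lsum x_rec] .
  obtain L where L: "0 < L" "\<And>d. d \<in> \<Gamma> \<Longrightarrow> norm (p d - p gstar) \<le> L * \<bar>d - gstar\<bar>"
    using unique_fixpoint_lipschitz_at[OF reloc cond1 p gstar_in] by blast
  have p_conv: "R_linear_conv (\<lambda>n. norm (p (gam n) - p gstar)) 0"
    using L gam_in by (intro R_linear_conv_dominated[OF gam_conv, of L]) auto
  have Tx_dist: "norm (T (gam n) (x n) - p (gam n)) \<le> norm (x n - p (gam n))" for n
    using contraction_with_fixpoint_dist[of \<beta> "T (gam n)" "p (gam n)" "x n"] contr gam_in p beta
      mult_left_le_one_le[of "norm (x n - p (gam n))" \<beta>]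
    by (force simp: fixset_def)
  have "R_linear_conv x (p gstar)"
    by (rule R_linear_conv_sum_bound[OF dist_conv p_conv],
        rule norm_diff_triangle_le[OF order_refl order_refl])
  moreover have "R_linear_conv (\<lambda>n. T (gam n) (x n)) (p gstar)"
    by (rule R_linear_conv_sum_bound[OF dist_conv p_conv],
        rule norm_diff_triangle_le[OF Tx_dist order_refl])
  moreover have "infdist (x n) (fixset (T (gam n))) = norm (x n - p (gam n))" for n
    using p gam_in by (simp add: dist_norm)
  ultimately show ?thesis
    using dist_conv p gstar_in by auto
qed

end
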